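(* Let $(T_1,T_2,T_3)$ be an associative Clifford extension over $(V,S^0,S^1)$ with $T_1\neq0$. Then either $\dim V=1$, or $\dim V\le\dim S^0\le4$.
   Context: All spaces are finite-dimensional real Euclidean. For a Euclidean space $X$, $\mathrm{Cl}(X)$ is the Clifford algebra with $x\cdot x=-|x|^2$; a "$\mathrm{Cl}(X)$-module $Y\oplus Z$" is a $\mathbb Z/2$-graded module with $X\cdot Y\subset Z$, $X\cdot Z\subset Y$, $Y\perp Z$, each $x\in X$ acting skew-symmetrically; the action is written $xy$. Let $V\neq0$ be Euclidean and $S^0\oplus S^1$ a nonzero $\mathrm{Cl}(V)$-module. A Clifford extension over $(V,S^0,S^1)$ is a triple of Euclidean spaces $T_1,T_2,T_3$ of equal dimension together with a $\mathrm{Cl}(V)$-module structure on $T_2\oplus T_3$, a $\mathrm{Cl}(S^0)$-module structure on $T_1\oplus T_2$, and a $\mathrm{Cl}(S^1)$-module structure on $T_1\oplus T_3$. It is associative if $(vs^0)t_1=v(s^0t_1)$ for all $v\in V,s^0\in S^0,t_1\in T_1$. *)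

theory Defs
  imports "HOL-Analysis.Analysis"
begin

text \<open>A Cl(X)-module structure on the Z/2-graded space Y (+) Z (orthogonal direct sum of
Euclidean spaces), given by the two halves of the action: m x y = x y in Z for y in Y,
n x z = x z in Y for z in Z.\<close>
definition clifford_module ::
  "('x::real_inner \<Rightarrow> 'y::real_inner \<Rightarrow> 'z::real_inner) \<Rightarrow> ('x \<Rightarrow> 'z \<Rightarrow> 'y) \<Rightarrow> bool" where
  "clifford_module m n \<longleftrightarrow>
     bilinear m \<and> bilinear n \<and>
     (\<forall>x y z. inner (m x y) z = - inner y (n x z)) \<and>
     (\<forall>x y. n x (m x y) = - ((norm x)\<^sup>2 *\<^sub>R y)) \<and>
     (\<forall>x z. m x (n x z) = - ((norm x)\<^sup>2 *\<^sub>R z))"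

text \<open>Clifford extension (T1,T2,T3) over (V,S0,S1), where S0 (+) S1 carries the Cl(V)-module
structure (mV0, mV1).\<close>
definition clifford_extension ::
  "('v::euclidean_space \<Rightarrow> 's0::euclidean_space \<Rightarrow> 's1::euclidean_space) \<Rightarrow> ('v \<Rightarrow> 's1 \<Rightarrow> 's0) \<Rightarrow>
   ('v \<Rightarrow> 't2::euclidean_space \<Rightarrow> 't3::euclidean_space) \<Rightarrow> ('v \<Rightarrow> 't3 \<Rightarrow> 't2) \<Rightarrow>
   ('s0 \<Rightarrow> 't1::euclidean_space \<Rightarrow> 't2) \<Rightarrow> ('s0 \<Rightarrow> 't2 \<Rightarrow> 't1) \<Rightarrow>
   ('s1 \<Rightarrow> 't1 \<Rightarrow> 't3) \<Rightarrow> ('s1 \<Rightarrow> 't3 \<Rightarrow> 't1) \<Rightarrow> bool" where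
  "clifford_extension mV0 mV1 a a' b b' c c' \<longleftrightarrow>
     clifford_module mV0 mV1 \<and>
     DIM('t1) = DIM('t2) \<and> DIM('t2) = DIM('t3) \<and>
     clifford_module a a' \<and> clifford_module b b' \<and> clifford_module c c'"

definition associative_extension ::
  "('v::euclidean_space \<Rightarrow> 's0::euclidean_space \<Rightarrow> 's1::euclidean_space) \<Rightarrow>
   ('v \<Rightarrow> 't2::euclidean_space \<Rightarrow> 't3::euclidean_space) \<Rightarrow>
   ('s0 \<Rightarrow> 't1::euclidean_space \<Rightarrow> 't2) \<Rightarrow> ('s1 \<Rightarrow> 't1 \<Rightarrow> 't3) \<Rightarrow> bool" where
  "associative_extension mV0 a b c \<longleftrightarrow> (\<forall>v s t. c (mV0 v s) t = a v (b s t))"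

end

theory Submission
  imports Defs
begin

text \<open>For orthonormal \<open>v\<^sub>0, v\<^sub>1 \<in> V\<close> the element \<open>-v\<^sub>0v\<^sub>1\<close> of the even Clifford algebra acts as an
orthogonal complex structure \<open>J\<close> on \<open>S\<^sup>0\<close> and \<open>K\<close> on \<open>T\<^sub>2\<close>, and associativity says
\<open>(Jx)t = K(xt)\<close>: the Clifford multiplication \<open>S\<^sup>0 \<times> T\<^sub>1 \<rightarrow> T\<^sub>2\<close> is complex linear in
\<open>x\<close>. This forces \<open>K\<close> to be multiplication by \<open>-e s\<^sub>0\<close> with \<open>e = Js\<^sub>0\<close>. If \<open>dim S\<^sup>0 \<ge> 5\<close>
there are unit vectors \<open>s \<perp> s\<^sub>0, e\<close> and \<open>s' \<perp> s\<^sub>0, e, s, Js\<close>; expanding the vanishing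
anticommutator of \<open>Js\<close> and \<open>s'\<close> on a unit \<open>t \<in> T\<^sub>1\<close> (which exists because every
\<open>euclidean_space\<close> has positive dimension) with these two descriptions of
\<open>K\<close> yields \<open>2 e s\<^sub>0 s s' t = 0\<close>, impossible since Clifford multiplication by unit vectors is
isometric. The bound \<open>dim V \<le> dim S\<^sup>0\<close> holds because \<open>v \<mapsto> vs\<close> is an isometry \<open>V \<rightarrow> S\<^sup>0\<close>
for a unit \<open>s \<in> S\<^sup>1\<close>.\<close>

lemma clifford_moduleD:
  assumes "clifford_module m n"
  shows clifford_module_bilinear: "bilinear m" "bilinear n"
    and clifford_module_adjoint: "inner (m x y) z = - inner y (n x z)"
    and clifford_module_square: "n x (m x y) = - ((norm x)\<^sup>2 *\<^sub>R y)" "m x (n x z) = - ((norm x)\<^sup>2 *\<^sub>R z)"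
  using assms unfolding clifford_module_def by blast+

lemma clifford_module_swap:
  assumes "clifford_module m n" shows "clifford_module n m"
proof -
  have "inner (n x z) y = - inner z (m x y)" for x y z
    using clifford_module_adjoint[OF assms, of x y z] by (simp add: inner_commute)
  then show ?thesis
    using clifford_moduleD[OF assms] unfolding clifford_module_def by blast
qed

lemma clifford_module_anticommute:
  assumes "clifford_module m n"
  shows "n x (m y t) + n y (m x t) = - ((2 * inner x y) *\<^sub>R t)"
proof -
  note bm = clifford_module_bilinear(1)[OF assms] and bn = clifford_module_bilinear(2)[OF assms]
  have "n (x + y) (m (x + y) t) = - ((norm (x + y))\<^sup>2 *\<^sub>R t)"
    by (rule clifford_module_square(1)[OF assms])
  also have "(norm (x + y))\<^sup>2 = (norm x)\<^sup>2 + 2 * inner x y + (norm y)\<^sup>2"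
    by (simp add: power2_norm_eq_inner inner_add_left inner_add_right inner_commute)
  finally have "n x (m x t) + n x (m y t) + (n y (m x t) + n y (m y t))
      = - (((norm x)\<^sup>2 + 2 * inner x y + (norm y)\<^sup>2) *\<^sub>R t)"
    by (simp add: bilinear_ladd[OF bm] bilinear_ladd[OF bn] bilinear_radd[OF bn] add_ac)
  then show ?thesis
    by (simp add: clifford_module_square[OF assms] algebra_simps eq_neg_iff_add_eq_0)
qed

lemma clifford_module_anticommute_orthogonal:
  "clifford_module m n \<Longrightarrow> inner x y = 0 \<Longrightarrow> n x (m y t) = - n y (m x t)"
  using clifford_module_anticommute[of m n x y t] by (simp add: eq_neg_iff_add_eq_0)

lemma clifford_module_inner_anticommute:
  assumes "clifford_module m n"
  shows "inner (m x y) (m x' z) + inner (m x' y) (m x z) = 2 * inner x x' * inner y z"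
proof -
  have "inner (m x y) (m x' z) + inner (m x' y) (m x z) = - inner y (n x (m x' z) + n x' (m x z))"
    by (simp add: clifford_module_adjoint[OF assms] inner_add_right)
  then show ?thesis
    by (simp add: clifford_module_anticommute[OF assms])
qed

lemma norm_clifford_module:
  assumes "clifford_module m n" shows "norm (m x y) = norm x * norm y"
proof -
  have "(norm (m x y))\<^sup>2 = (norm x * norm y)\<^sup>2"
    by (simp add: power2_norm_eq_inner[of "m x y"] clifford_module_adjoint[OF assms]
        clifford_module_square[OF assms] power_mult_distrib power2_norm_eq_inner[of y])
  then show ?thesis by simp
qed

lemma clifford_module_commute_past_two:
  assumes "clifford_module m n" "inner s e = 0" "inner s s\<^sub>0 = 0"
  shows "n s (m e (n s\<^sub>0 y)) = n e (m s\<^sub>0 (n s y))"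
proof -
  have "n s (m e (n s\<^sub>0 y)) = - n e (m s (n s\<^sub>0 y))"
    by (rule clifford_module_anticommute_orthogonal[OF assms(1,2)])
  also have "m s (n s\<^sub>0 y) = - m s\<^sub>0 (n s y)"
    by (rule clifford_module_anticommute_orthogonal[OF clifford_module_swap[OF assms(1)] assms(3)])
  finally show ?thesis
    by (simp add: bilinear_rneg[OF clifford_module_bilinear(2)[OF assms(1)]])
qed

lemma DIM_le_of_linear_isometry:
  fixes f :: "'a::euclidean_space \<Rightarrow> 'b::euclidean_space"
  assumes "linear f" "\<And>x. norm (f x) = norm x"
  shows "DIM('a) \<le> DIM('b)"
proof -
  have "inj f"
  proof (rule injI)
    fix x y assume "f x = f y"
    then have "norm (f (x - y)) = 0"
      by (simp add: linear_diff[OF assms(1)])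
    then show "x = y" by (simp add: assms(2))
  qed
  then have "dim (f ` UNIV) = dim (UNIV :: 'a set)"
    using assms(1) by (intro dim_image_eq) auto
  then show ?thesis
    using dim_subset_UNIV[of "f ` UNIV"] by simp
qed

lemma DIM_le_of_clifford_module:
  fixes m :: "'x::euclidean_space \<Rightarrow> 'y::euclidean_space \<Rightarrow> 'z::euclidean_space"
  assumes "clifford_module m n"
  shows "DIM('x) \<le> DIM('z)"
proof -
  obtain y :: 'y where "y \<in> Basis" using nonempty_Basis by blast
  show ?thesis
    by (rule DIM_le_of_linear_isometry[of "\<lambda>x. m x y"])
      (use clifford_module_bilinear(1)[OF assms] \<open>y \<in> Basis\<close> in
        \<open>simp_all add: bilinear_def norm_clifford_module[OF assms]\<close>)
qed

lemma exists_unit_orthogonal_finite: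
  fixes W :: "'a::euclidean_space set"
  assumes "finite W" "card W < DIM('a)"
  obtains x where "norm x = 1" "\<And>y. y \<in> W \<Longrightarrow> inner x y = 0"
proof -
  have "dim W < DIM('a)"
    using dim_le_card[OF span_superset assms(1)] assms(2) by linarith
  then obtain x where "x \<noteq> 0" "\<And>y. y \<in> span W \<Longrightarrow> orthogonal x y"
    using orthogonal_to_subspace_exists by blast
  then show ?thesis
    by (intro that[of "x /\<^sub>R norm x"]) (auto simp: orthogonal_def span_base)
qed

definition bivector_action ::
  "('x::real_inner \<Rightarrow> 'y::real_inner \<Rightarrow> 'z::real_inner) \<Rightarrow> ('x \<Rightarrow> 'z \<Rightarrow> 'y) \<Rightarrow> 'x \<Rightarrow> 'x \<Rightarrow> 'y \<Rightarrow> 'y"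
  where "bivector_action m n v w y = - n v (m w y)"

lemma bivector_action_skew:
  assumes "clifford_module m n" "inner v w = 0"
  shows "inner (bivector_action m n v w x) y = - inner x (bivector_action m n v w y)"
proof -
  have "inner (m w x) (m v y) + inner (m v x) (m w y) = 0"
    using clifford_module_inner_anticommute[OF assms(1), of w x v y] assms(2)
    by (simp add: inner_commute)
  then show ?thesis
    unfolding bivector_action_def
    using clifford_module_adjoint[OF clifford_module_swap[OF assms(1)], of v "m w x" y]
      clifford_module_adjoint[OF assms(1), of v x "m w y"]
    by (simp add: inner_commute)
qed

lemma norm_bivector_action:
  assumes "clifford_module m n"
  shows "norm (bivector_action m n v w y) = norm v * norm w * norm y"
  unfolding bivector_action_def
  by (simp add: norm_clifford_module[OF assms] norm_clifford_module[OF clifford_module_swap[OF assms]])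

lemma clifford_module_bivector_action:
  assumes "clifford_module m n" "norm v = 1"
  shows "m v (bivector_action m n v w y) = m w y"
  unfolding bivector_action_def
  by (simp add: assms bilinear_rneg[OF clifford_module_bilinear(1)[OF assms(1)]]
      clifford_module_square(2))

text \<open>\<open>v((Jx)t) = (v(Jx))t = (wx)t = w(xt)\<close> by associativity; then cancel \<open>v\<close> using \<open>v\<^sup>2 = -1\<close>.\<close>
lemma associative_extension_bivector_action:
  assumes "associative_extension mV0 a b c"
    and "clifford_module mV0 mV1" "clifford_module a a'" "norm v = 1"
  shows "b (bivector_action mV0 mV1 v w x) t = bivector_action a a' v w (b x t)"
proof -
  have "a v (b (bivector_action mV0 mV1 v w x) t) = a w (b x t)"
    using assms(1) clifford_module_bivector_action[OF assms(2,4)]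
    unfolding associative_extension_def by metis
  then have "- b (bivector_action mV0 mV1 v w x) t = a' v (a w (b x t))"
    by (metis clifford_module_square(1)[OF assms(3)] assms(4) power_one scaleR_one)
  then show ?thesis
    unfolding bivector_action_def by (metis minus_minus)
qed

lemma skew_adjoint_minus:
  assumes "\<And>y z. inner (K y) z = - inner y (K z)"
  shows "K (- z) = - K z"
proof -
  have "inner (K (- z)) y = inner (- K z) y" for y
    by (simp add: assms)
  then show ?thesis
    by (metis inner_commute vector_eq_ldot)
qed

lemma clifford_module_intertwine_adjoint:
  assumes "clifford_module b b'"
    and skew: "\<And>y z. inner (K y) z = - inner y (K z)"
    and intertwine: "\<And>t. b x' t = K (b x t)"
  shows "b' x' z = - b' x (K z)"
proof -
  have "inner t (b' x' z) = inner t (- b' x (K z))" for t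
    using clifford_module_adjoint[OF assms(1), of x' t z] clifford_module_adjoint[OF assms(1), of x t "K z"]
    by (simp add: intertwine skew)
  then show ?thesis
    using vector_eq_ldot by blast
qed

lemma clifford_module_intertwine_eq:
  assumes "clifford_module b b'" "norm s\<^sub>0 = 1"
    and skew: "\<And>y z. inner (K y) z = - inner y (K z)"
    and intertwine: "\<And>t. b e t = K (b s\<^sub>0 t)"
  shows "K z = - b e (b' s\<^sub>0 z)"
proof -
  have "b e (b' s\<^sub>0 z) = K (- z)"
    by (simp add: intertwine clifford_module_square(2)[OF assms(1)] assms(2))
  then show ?thesis
    by (simp add: skew_adjoint_minus[OF skew])
qed

lemma DIM_le_4_if_clifford_module_intertwines:
  fixes b :: "'s::euclidean_space \<Rightarrow> 't1::euclidean_space \<Rightarrow> 't2::real_inner"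
  assumes cB: "clifford_module b b'"
    and norm_J: "\<And>x. norm (J x) = norm x" and J_skew: "\<And>x y. inner (J x) y = - inner x (J y)"
    and skew: "\<And>y z. inner (K y) z = - inner y (K z)"
    and intertwine: "\<And>x t. b (J x) t = K (b x t)"
  shows "DIM('s) \<le> 4"
proof (rule ccontr)
  assume "\<not> DIM('s) \<le> 4"
  obtain s\<^sub>0 :: 's where "s\<^sub>0 \<in> Basis" using nonempty_Basis by blast
  then have "norm s\<^sub>0 = 1" by simp
  define e where "e = J s\<^sub>0"
  have "norm e = 1" "inner e s\<^sub>0 = 0"
    using J_skew[of s\<^sub>0 s\<^sub>0] by (simp_all add: e_def norm_J \<open>norm s\<^sub>0 = 1\<close> inner_commute)
  have card2: "card {s\<^sub>0, e} < DIM('s)"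
    using \<open>\<not> DIM('s) \<le> 4\<close> card_length[of "[s\<^sub>0, e]"] by simp
  obtain s where "norm s = 1" "inner s s\<^sub>0 = 0" "inner s e = 0"
    by (rule exists_unit_orthogonal_finite[OF _ card2]) auto
  have card4: "card {s\<^sub>0, e, s, J s} < DIM('s)"
    using \<open>\<not> DIM('s) \<le> 4\<close> card_length[of "[s\<^sub>0, e, s, J s]"] by simp
  obtain s' where "norm s' = 1"
      "inner s' s\<^sub>0 = 0" "inner s' e = 0" "inner s' s = 0" "inner s' (J s) = 0"
    by (rule exists_unit_orthogonal_finite[OF _ card4]) auto
  obtain t :: 't1 where "t \<in> Basis" using nonempty_Basis by blast
  define U where "U = b' s (b s' t)"
  have K_eq: "K z = - b e (b' s\<^sub>0 z)" for z
    by (rule clifford_module_intertwine_eq[OF cB \<open>norm s\<^sub>0 = 1\<close> skew intertwine[of s\<^sub>0, folded e_def]])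
  note b_neg = bilinear_rneg[OF clifford_module_bilinear(1)[OF cB]]
    and b'_neg = bilinear_rneg[OF clifford_module_bilinear(2)[OF cB]]
  have "b' (J s) (b s' t) = b' e (b s\<^sub>0 U)"
  proof -
    have "b' (J s) (b s' t) = b' s (b e (b' s\<^sub>0 (b s' t)))"
      using clifford_module_intertwine_adjoint[OF cB skew intertwine[of s]] by (simp add: K_eq b'_neg)
    also have "\<dots> = b' e (b s\<^sub>0 U)"
      unfolding U_def using clifford_module_commute_past_two[OF cB] \<open>inner s e = 0\<close> \<open>inner s s\<^sub>0 = 0\<close>
      by blast
    finally show ?thesis .
  qed
  moreover have "b' s' (b (J s) t) = b' e (b s\<^sub>0 U)"
  proof -
    have "b' s' (b (J s) t) = - b' s' (b e (b' s\<^sub>0 (b s t)))"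
      by (simp add: intertwine K_eq b'_neg)
    also have "\<dots> = - b' e (b s\<^sub>0 (b' s' (b s t)))"
      using clifford_module_commute_past_two[OF cB] \<open>inner s' e = 0\<close> \<open>inner s' s\<^sub>0 = 0\<close>
      by simp
    also have "b' s' (b s t) = - U"
      unfolding U_def using clifford_module_anticommute_orthogonal[OF cB] \<open>inner s' s = 0\<close> by blast
    finally show ?thesis
      by (simp add: b_neg b'_neg)
  qed
  moreover have "b' (J s) (b s' t) + b' s' (b (J s) t) = 0"
    using clifford_module_anticommute[OF cB, of "J s" s' t] \<open>inner s' (J s) = 0\<close>
    by (simp add: inner_commute)
  ultimately have "b' e (b s\<^sub>0 U) = 0"
    by (simp flip: scaleR_2)
  moreover have "norm (b' e (b s\<^sub>0 U)) = 1"
    using \<open>norm e = 1\<close> \<open>norm s\<^sub>0 = 1\<close> \<open>norm s = 1\<close> \<open>norm s' = 1\<close> \<open>t \<in> Basis\<close>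
    by (simp add: U_def norm_clifford_module[OF cB] norm_clifford_module[OF clifford_module_swap[OF cB]])
  ultimately show False
    by simp
qed

theorem mainTheorem9:
  fixes mV0 :: "'v::euclidean_space \<Rightarrow> 's0::euclidean_space \<Rightarrow> 's1::euclidean_space"
    and mV1 :: "'v \<Rightarrow> 's1 \<Rightarrow> 's0"
    and a :: "'v \<Rightarrow> 't2::euclidean_space \<Rightarrow> 't3::euclidean_space" and a' :: "'v \<Rightarrow> 't3 \<Rightarrow> 't2"
    and b :: "'s0 \<Rightarrow> 't1::euclidean_space \<Rightarrow> 't2" and b' :: "'s0 \<Rightarrow> 't2 \<Rightarrow> 't1"
    and c :: "'s1 \<Rightarrow> 't1 \<Rightarrow> 't3" and c' :: "'s1 \<Rightarrow> 't3 \<Rightarrow> 't1"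
  assumes "clifford_extension mV0 mV1 a a' b b' c c'"
    and "associative_extension mV0 a b c"
  shows "DIM('v) = 1 \<or> (DIM('v) \<le> DIM('s0) \<and> DIM('s0) \<le> 4)"
proof -
  have cV: "clifford_module mV0 mV1" and cA: "clifford_module a a'" and cB: "clifford_module b b'"
    using assms(1) unfolding clifford_extension_def by auto
  have "DIM('v) \<le> DIM('s0)"
    by (rule DIM_le_of_clifford_module[OF clifford_module_swap[OF cV]])
  moreover have "DIM('s0) \<le> 4" if "DIM('v) \<noteq> 1"
  proof -
    have "\<not> card (Basis :: 'v set) \<le> Suc 0"
      using that DIM_positive[where 'a = 'v] by linarith
    then obtain v w :: 'v where "v \<in> Basis" "w \<in> Basis" "v \<noteq> w"
      using card_le_Suc0_iff_eq[OF finite_Basis] by blast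
    then have "norm v = 1" "norm w = 1" "inner v w = 0"
      by (simp_all add: inner_not_same_Basis)
    then show ?thesis
      by (intro DIM_le_4_if_clifford_module_intertwines[OF cB, where J = "bivector_action mV0 mV1 v w"
            and K = "bivector_action a a' v w"])
        (simp_all add: norm_bivector_action bivector_action_skew cV cA
          associative_extension_bivector_action[OF assms(2) cV cA])
  qed
  ultimately show ?thesis
    by blast
qed

end
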